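(* Suppose Assumption 1 (context) holds. For any $u,v\in\mathbb{D}$ and any $j\in\{1,\dots,\widehat n\}$ such that $u_i=v_i$ for all $i\ne j$, we have $|\nabla_jd(u)-\nabla_jd(v)|\le L_j\|u-v\|$, where $L_j=\frac{\|A_j\|^2}{n^2\mu}$ if $j\le n$, $L_j=\frac{\|B_{j-n,:}\|^2}{\mu}$ if $n<j\le n+p$, and $L_j=\frac{L_{g_{j-n-p}}^2}{\mu}$ if $j>n+p$.
   Context: Integers $n,t\ge1$, $p,m\ge0$; $A\in\mathbb{R}^{t\times n}$ with columns $A_j$; $B\in\mathbb{R}^{p\times t}$ with rows $B_{j,:}$; $b\in\mathbb{R}^p$; $f:\mathbb{R}^t\to\mathbb{R}$; $g_i:\mathbb{R}^t\to\mathbb{R}$ ($i\le m$). Assumption 1 includes: $f$ is $\mu$-strongly convex ($\mu>0$); each $g_i$ is convex and every subgradient of $g_i$ has norm at most $L_{g_i}$ (plus convex $M$-Lipschitz loss functions, a Slater point, and finite optimal value for the associated constrained problem). $\widehat n=n+p+m$, $\mathbb{D}=\{u\in\mathbb{R}^{\widehat n}:u_{n+p+1},\dots,u_{\widehat n}\ge0\}$. For $u\in\mathbb{D}$: $L_f(x,u)=f(x)+\langle u_{1:n},A^Tx/n\rangle+\langle u_{n+1:n+p},Bx+b\rangle+\sum_{i=1}^mu_{n+p+i}g_i(x)$, $x^*(u)=\arg\min_xL_f(x,u)$ (unique), $d(u)=-L_f(x^*(u),u)$, which is differentiable on $\mathbb{D}$ with $\nabla d(u)=-[(A^Tx^*(u)/n)^T,(Bx^*(u)+b)^T,g_1(x^*(u)),\dots,g_m(x^*(u))]^T$;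 $\nabla_jd(u)$ is its $j$-th entry. *)

theory Defs
  imports "HOL-Analysis.Analysis"
begin

text \<open>Vectors of R^t are modelled as real^'t. Dual variables u in R^(n+p+m)
  are modelled as functions nat => real, of which only the entries 1..n+p+m
  (1-based, as in the paper) are relevant.\<close>

definition strongly_convex :: "real \<Rightarrow> ('a::real_normed_vector \<Rightarrow> real) \<Rightarrow> bool" where
  "strongly_convex \<mu> f \<longleftrightarrow>
     (\<forall>x y \<theta>. 0 \<le> \<theta> \<and> \<theta> \<le> 1 \<longrightarrow>
        f (\<theta> *\<^sub>R x + (1 - \<theta>) *\<^sub>R y)
          \<le> \<theta> * f x + (1 - \<theta>) * f y - \<mu> / 2 * \<theta> * (1 - \<theta>) * (norm (x - y))\<^sup>2)"

definition is_subgradient :: "('a::real_inner \<Rightarrow> real) \<Rightarrow> 'a \<Rightarrow> 'a \<Rightarrow> bool" where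
  "is_subgradient g x s \<longleftrightarrow> (\<forall>y. g y \<ge> g x + inner s (y - x))"

definition dual_dom :: "nat \<Rightarrow> nat \<Rightarrow> nat \<Rightarrow> (nat \<Rightarrow> real) set" where
  "dual_dom n p m = {u. \<forall>i. n + p < i \<and> i \<le> n + p + m \<longrightarrow> u i \<ge> 0}"

text \<open>Lagrangian L_f(x,u). A j (1<=j<=n) is the j-th column of A,
  Brow j (1<=j<=p) is the j-th row of B, b j the j-th entry of b, g i the i-th constraint.\<close>
definition lagr ::
  "nat \<Rightarrow> nat \<Rightarrow> nat \<Rightarrow> (nat \<Rightarrow> real^'t) \<Rightarrow> (nat \<Rightarrow> real^'t) \<Rightarrow> (nat \<Rightarrow> real)
   \<Rightarrow> (real^'t \<Rightarrow> real) \<Rightarrow> (nat \<Rightarrow> real^'t \<Rightarrow> real) \<Rightarrow> real^'t \<Rightarrow> (nat \<Rightarrow> real) \<Rightarrow> real" where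
  "lagr n p m A Brow b f g x u =
     f x + (\<Sum>j=1..n. u j * (inner (A j) x / real n))
         + (\<Sum>j=1..p. u (n + j) * (inner (Brow j) x + b j))
         + (\<Sum>i=1..m. u (n + p + i) * g i x)"

text \<open>x*(u) = argmin_x L_f(x,u) (unique under Assumption 1).\<close>
definition xstar ::
  "nat \<Rightarrow> nat \<Rightarrow> nat \<Rightarrow> (nat \<Rightarrow> real^'t) \<Rightarrow> (nat \<Rightarrow> real^'t) \<Rightarrow> (nat \<Rightarrow> real)
   \<Rightarrow> (real^'t \<Rightarrow> real) \<Rightarrow> (nat \<Rightarrow> real^'t \<Rightarrow> real) \<Rightarrow> (nat \<Rightarrow> real) \<Rightarrow> real^'t" where
  "xstar n p m A Brow b f g u =
     (THE x. \<forall>y. lagr n p m A Brow b f g x u \<le> lagr n p m A Brow b f g y u)"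

definition dual_fun ::
  "nat \<Rightarrow> nat \<Rightarrow> nat \<Rightarrow> (nat \<Rightarrow> real^'t) \<Rightarrow> (nat \<Rightarrow> real^'t) \<Rightarrow> (nat \<Rightarrow> real)
   \<Rightarrow> (real^'t \<Rightarrow> real) \<Rightarrow> (nat \<Rightarrow> real^'t \<Rightarrow> real) \<Rightarrow> (nat \<Rightarrow> real) \<Rightarrow> real" where
  "dual_fun n p m A Brow b f g u = - lagr n p m A Brow b f g (xstar n p m A Brow b f g u) u"

definition grad_d ::
  "nat \<Rightarrow> nat \<Rightarrow> nat \<Rightarrow> (nat \<Rightarrow> real^'t) \<Rightarrow> (nat \<Rightarrow> real^'t) \<Rightarrow> (nat \<Rightarrow> real)
   \<Rightarrow> (real^'t \<Rightarrow> real) \<Rightarrow> (nat \<Rightarrow> real^'t \<Rightarrow> real) \<Rightarrow> (nat \<Rightarrow> real) \<Rightarrow> nat \<Rightarrow> real" where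
  "grad_d n p m A Brow b f g u j =
     (let x = xstar n p m A Brow b f g u in
      if j \<le> n then - (inner (A j) x / real n)
      else if j \<le> n + p then - (inner (Brow (j - n)) x + b (j - n))
      else - g (j - n - p) x)"

definition vnorm :: "nat \<Rightarrow> (nat \<Rightarrow> real) \<Rightarrow> real" where
  "vnorm N u = sqrt (\<Sum>i=1..N. (u i)\<^sup>2)"

end

theory Submission
  imports Defs
begin

(* Let x = x*(u), y = x*(v), delta = u_j - v_j, and let c_j be the j-th entry of the constraint
   map x |-> (A^T x / n, B x + b, g_1 x, ..., g_m x), so that grad_j d = - c_j o x*.  Since u and v
   differ only in coordinate j, L_f(., u) = L_f(., v) + delta c_j.  Both Lagrangians are
   mu-strongly convex, so the quadratic growth of each around its minimiser gives
   mu |x - y|^2 <= delta (c_j y - c_j x).  As c_j is K_j-Lipschitz (Cauchy-Schwarz for the affine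
   entries, the subgradient bound for g), |x - y| <= K_j |delta| / mu, hence
   |c_j x - c_j y| <= K_j^2 |delta| / mu <= L_j |u - v|. *)

lemma convex_on_sum_fun:
  assumes "finite I" "convex S" "\<And>i. i \<in> I \<Longrightarrow> convex_on S (F i)"
  shows "convex_on S (\<lambda>x. \<Sum>i\<in>I. F i x)"
  using assms(1,3)
proof (induction I rule: finite_induct)
  case empty
  then show ?case using assms(2) by (simp add: convex_on_const)
next
  case (insert i I)
  then show ?case by (simp add: convex_on_add)
qed

lemma convex_on_mult_affine:
  fixes h :: "'a::real_vector \<Rightarrow> real"
  assumes "\<And>x y t. h ((1 - t) *\<^sub>R x + t *\<^sub>R y) = (1 - t) * h x + t * h y"
  shows "convex_on UNIV (\<lambda>x. c * h x)"
proof (rule convex_onI)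
  fix t :: real and x y :: 'a
  show "c * h ((1 - t) *\<^sub>R x + t *\<^sub>R y) \<le> (1 - t) * (c * h x) + t * (c * h y)"
    unfolding assms by (simp add: algebra_simps)
qed simp

lemma strongly_convex_imp_convex_on:
  assumes "strongly_convex \<mu> F" "\<mu> \<ge> 0"
  shows "convex_on UNIV F"
proof (rule convex_onI)
  fix t :: real and x y assume t: "0 < t" "t < 1"
  have "F (t *\<^sub>R y + (1 - t) *\<^sub>R x)
        \<le> t * F y + (1 - t) * F x - \<mu> / 2 * t * (1 - t) * (norm (y - x))\<^sup>2"
    using assms(1) t unfolding strongly_convex_def by auto
  moreover have "\<mu> / 2 * t * (1 - t) * (norm (y - x))\<^sup>2 \<ge> 0"
    using t assms(2) by simp
  ultimately show "F ((1 - t) *\<^sub>R x + t *\<^sub>R y) \<le> (1 - t) * F x + t * F y"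
    by (simp add: add.commute)
qed simp

lemma strongly_convex_add_convex_on:
  assumes "strongly_convex \<mu> F" "convex_on UNIV G"
  shows "strongly_convex \<mu> (\<lambda>x. F x + G x)"
  unfolding strongly_convex_def
proof (intro allI impI)
  fix x y and t :: real assume t: "0 \<le> t \<and> t \<le> 1"
  have "F (t *\<^sub>R x + (1 - t) *\<^sub>R y)
        \<le> t * F x + (1 - t) * F y - \<mu> / 2 * t * (1 - t) * (norm (x - y))\<^sup>2"
    using assms(1) t unfolding strongly_convex_def by auto
  moreover have "G ((1 - (1 - t)) *\<^sub>R x + (1 - t) *\<^sub>R y) \<le> (1 - (1 - t)) * G x + (1 - t) * G y"
    using convex_onD[OF assms(2), of "1 - t" x y] t by auto
  ultimately show "F (t *\<^sub>R x + (1 - t) *\<^sub>R y) + G (t *\<^sub>R x + (1 - t) *\<^sub>R y)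
         \<le> t * (F x + G x) + (1 - t) * (F y + G y) - \<mu> / 2 * t * (1 - t) * (norm (x - y))\<^sup>2"
    by (simp add: algebra_simps)
qed

lemma graph_point_notin_rel_interior_epigraph:
  fixes F :: "'a::euclidean_space \<Rightarrow> real"
  shows "(x, F x) \<notin> rel_interior (epigraph UNIV F)"
proof
  let ?S = "epigraph UNIV F"
  assume "(x, F x) \<in> rel_interior ?S"
  then obtain e where e: "0 < e" "cball (x, F x) e \<inter> affine hull ?S \<subseteq> ?S"
    by (force simp: rel_interior_cball)
  have "(x, F x) \<in> ?S" "(x, F x + 1) \<in> ?S"
    by (simp_all add: epigraph_def)
  then have "(1 + e) *\<^sub>R (x, F x) + (- e) *\<^sub>R (x, F x + 1) \<in> affine hull ?S"
    by (intro mem_affine[OF affine_affine_hull] hull_inc) simp_all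
  moreover have "(1 + e) *\<^sub>R (x, F x) + (- e) *\<^sub>R (x, F x + 1) = (x, F x - e)"
    by (simp add: algebra_simps)
  moreover have "(x, F x - e) \<in> cball (x, F x) e"
    using e(1) by (simp add: dist_Pair_Pair dist_real_def)
  ultimately have "(x, F x - e) \<in> ?S" using e(2) by auto
  then show False using e(1) by (simp add: epigraph_def)
qed

lemma convex_on_has_subgradient:
  fixes F :: "'a::euclidean_space \<Rightarrow> real"
  assumes "convex_on UNIV F"
  shows "\<exists>s. is_subgradient F x s"
proof -
  let ?S = "epigraph UNIV F"
  have "convex ?S" using assms by (rule convex_epigraphI)
  moreover have "(x, F x) \<in> ?S" by (simp add: epigraph_def)
  ultimately obtain a1 a2 where a: "(a1, a2) \<noteq> 0"
    and supp: "\<And>z. z \<in> ?S \<Longrightarrow> (a1, a2) \<bullet> (x, F x) \<le> (a1, a2) \<bullet> z"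
    using supporting_hyperplane_rel_boundary graph_point_notin_rel_interior_epigraph
    by (metis surj_pair)
  have supp': "a1 \<bullet> x + a2 * F x \<le> a1 \<bullet> y + a2 * r" if "F y \<le> r" for y r
    using supp[of "(y, r)"] that by (simp add: epigraph_def inner_Pair)
  have "a2 \<ge> 0"
    using supp'[of x "F x + 1"] by (simp add: algebra_simps)
  moreover have "a2 \<noteq> 0"
  proof
    assume "a2 = 0"
    then have "a1 \<bullet> a1 \<le> 0"
      using supp'[of "x - a1" "F (x - a1)"] by (simp add: inner_diff_right)
    then have "a1 = 0" by (metis inner_gt_zero_iff not_le)
    with a \<open>a2 = 0\<close> show False by (simp add: zero_prod_def)
  qed
  ultimately have a2: "a2 > 0" by simp
  have "F x + inner (- (1 / a2) *\<^sub>R a1) (y - x) \<le> F y" for y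
  proof -
    have "a2 * (F x - (1 / a2) * (a1 \<bullet> (y - x))) \<le> a2 * F y"
      using supp'[of y "F y"] a2 by (simp add: algebra_simps inner_diff_right)
    then show ?thesis using a2 by simp
  qed
  then show ?thesis unfolding is_subgradient_def by blast
qed

lemma lipschitz_if_bounded_subgradients:
  fixes G :: "'a::euclidean_space \<Rightarrow> real"
  assumes "convex_on UNIV G" and bounded: "\<And>x s. is_subgradient G x s \<Longrightarrow> norm s \<le> L"
  shows "\<bar>G x - G y\<bar> \<le> L * norm (x - y)"
proof -
  have one_sided: "G x - G y \<le> L * norm (x - y)" for x y
  proof -
    obtain s where s: "is_subgradient G x s"
      using convex_on_has_subgradient[OF assms(1)] by blast
    have "G x - G y \<le> inner s (x - y)"
      using s[unfolded is_subgradient_def, rule_format, of y] by (simp add: inner_diff_right)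
    also have "\<dots> \<le> norm s * norm (x - y)" by (rule norm_cauchy_schwarz)
    also have "\<dots> \<le> L * norm (x - y)" using bounded[OF s] by (simp add: mult_right_mono)
    finally show ?thesis .
  qed
  show ?thesis
    using one_sided[of x y] one_sided[of y x] by (simp add: norm_minus_commute abs_le_iff)
qed

lemma strongly_convex_quadratic_minorant:
  fixes F :: "'a::euclidean_space \<Rightarrow> real"
  assumes sc: "strongly_convex \<mu> F" and "\<mu> \<ge> 0"
  obtains s where "\<And>z. F 0 + inner s z + \<mu> / 4 * (norm z)\<^sup>2 \<le> F z"
proof -
  obtain s where s: "is_subgradient F 0 s"
    using convex_on_has_subgradient strongly_convex_imp_convex_on[OF assms] by blast
  have "F 0 + inner s z + \<mu> / 4 * (norm z)\<^sup>2 \<le> F z" for z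
  proof -
    have "F ((1/2) *\<^sub>R z + (1 - 1/2) *\<^sub>R 0)
          \<le> (1/2) * F z + (1 - 1/2) * F 0 - \<mu> / 2 * (1/2) * (1 - 1/2) * (norm (z - 0))\<^sup>2"
      using sc[unfolded strongly_convex_def, rule_format, of "1/2" z 0] by simp
    moreover have "F 0 + inner s ((1/2) *\<^sub>R z) \<le> F ((1/2) *\<^sub>R z)"
      using s[unfolded is_subgradient_def, rule_format, of "(1/2) *\<^sub>R z"] by simp
    ultimately show ?thesis by (simp add: algebra_simps)
  qed
  then show ?thesis by (rule that)
qed

lemma continuous_attains_min_quadratic_minorant:
  fixes F :: "'a::euclidean_space \<Rightarrow> real"
  assumes cont: "continuous_on UNIV F" and "a > 0"
    and minorant: "\<And>z. F 0 + inner s z + a * (norm z)\<^sup>2 \<le> F z"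
  shows "\<exists>x. \<forall>y. F x \<le> F y"
proof -
  define R where "R = norm s / a + 1"
  have "R > 0" using \<open>a > 0\<close> by (simp add: R_def add_nonneg_pos)
  moreover have "continuous_on (cball 0 R) F" using cont continuous_on_subset by blast
  ultimately obtain x where "\<forall>y \<in> cball 0 R. F x \<le> F y"
    using continuous_attains_inf[OF compact_cball, of 0 R F] by auto
  moreover have "F 0 \<le> F y" if "norm y > R" for y
  proof -
    have "norm s \<le> a * norm y" using that \<open>a > 0\<close> by (simp add: R_def field_simps)
    then have "norm s * norm y \<le> a * (norm y)\<^sup>2"
      by (metis mult.assoc mult_right_mono norm_ge_zero power2_eq_square)
    moreover have "- (norm s * norm y) \<le> inner s y"
      using Cauchy_Schwarz_ineq2[of s y] by linarith
    ultimately show ?thesis using minorant[of y] by linarith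
  qed
  ultimately have "F x \<le> F y" for y
    using \<open>R > 0\<close> by (metis centre_in_cball less_imp_le mem_cball_0 not_le order_trans)
  then show ?thesis by blast
qed

lemma strongly_convex_quadratic_growth:
  assumes sc: "strongly_convex \<mu> F" and min: "\<And>z. F x \<le> F z"
  shows "F x + \<mu> / 2 * (norm (y - x))\<^sup>2 \<le> F y"
proof (rule ccontr)
  define c where "c = \<mu> / 2 * (norm (y - x))\<^sup>2"
  define D where "D = F y - F x"
  assume "\<not> ?thesis"
  then have "D < c" by (simp add: c_def D_def)
  have "D \<ge> 0" using min[of y] by (simp add: D_def)
  with \<open>D < c\<close> have "c > 0" by linarith
  \<comment> \<open>A fixed t with (1 - t) c > D replaces the usual limit t \<rightarrow> 0.\<close>
  define t where "t = (c - D) / (2 * c)"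
  have t: "0 < t" "t \<le> 1/2"
    using \<open>D < c\<close> \<open>D \<ge> 0\<close> \<open>c > 0\<close> by (simp_all add: t_def field_simps)
  have "F x \<le> F (t *\<^sub>R y + (1 - t) *\<^sub>R x)" by (rule min)
  also have "\<dots> \<le> t * F y + (1 - t) * F x - t * (1 - t) * c"
    using sc[unfolded strongly_convex_def, rule_format, of t y x] t
    by (simp add: c_def mult.assoc mult.left_commute)
  finally have "t * ((1 - t) * c) \<le> t * D" by (simp add: D_def algebra_simps)
  then have "(1 - t) * c \<le> D" using t by simp
  moreover have "(1 - t) * c = (c + D) / 2" using \<open>c > 0\<close> by (simp add: t_def field_simps)
  ultimately show False using \<open>D < c\<close> by simp
qed

lemma strongly_convex_ex1_min:
  fixes F :: "'a::euclidean_space \<Rightarrow> real"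
  assumes sc: "strongly_convex \<mu> F" and "\<mu> > 0"
  shows "\<exists>!x. \<forall>y. F x \<le> F y"
proof -
  have "convex_on UNIV F"
    using strongly_convex_imp_convex_on[OF sc] \<open>\<mu> > 0\<close> by simp
  then have "continuous_on UNIV F" by (intro convex_on_continuous) auto
  moreover obtain s where "\<And>z. F 0 + inner s z + \<mu> / 4 * (norm z)\<^sup>2 \<le> F z"
    using strongly_convex_quadratic_minorant sc \<open>\<mu> > 0\<close> by (metis less_imp_le)
  ultimately obtain x where x: "\<forall>y. F x \<le> F y"
    using continuous_attains_min_quadratic_minorant \<open>\<mu> > 0\<close> by (metis zero_less_divide_iff zero_less_numeral)
  moreover have "z = x" if z: "\<forall>y. F z \<le> F y" for z
  proof -
    have "F z + \<mu> / 2 * (norm (x - z))\<^sup>2 \<le> F x"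
      using strongly_convex_quadratic_growth sc z by blast
    with x \<open>\<mu> > 0\<close> have "(norm (x - z))\<^sup>2 \<le> 0"
      by (smt (verit) zero_less_divide_iff mult_pos_pos zero_less_power2)
    then show ?thesis by simp
  qed
  ultimately show ?thesis by blast
qed

lemma strongly_convex_argmin_perturbation:
  assumes sc: "strongly_convex \<mu> F" "strongly_convex \<mu> (\<lambda>z. F z + \<delta> * H z)" and "\<mu> > 0"
    and min_x: "\<And>z. F x \<le> F z"
    and min_y: "\<And>z. F y + \<delta> * H y \<le> F z + \<delta> * H z"
    and lip: "\<And>a b. \<bar>H a - H b\<bar> \<le> K * norm (a - b)"
  shows "\<bar>H x - H y\<bar> \<le> K\<^sup>2 / \<mu> * \<bar>\<delta>\<bar>"
proof (cases "x = y")
  case True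
  then show ?thesis using \<open>\<mu> > 0\<close> by simp
next
  case False
  let ?r = "norm (x - y)"
  have "?r > 0" using False by simp
  have "F x + \<mu> / 2 * ?r\<^sup>2 \<le> F y"
    using strongly_convex_quadratic_growth[OF sc(1) min_x, of y] by (metis norm_minus_commute)
  moreover have "F y + \<delta> * H y + \<mu> / 2 * ?r\<^sup>2 \<le> F x + \<delta> * H x"
    using strongly_convex_quadratic_growth[OF sc(2), of y x] min_y by simp
  ultimately have "\<mu> * ?r\<^sup>2 \<le> \<delta> * (H x - H y)" by (simp add: algebra_simps)
  also have "\<dots> \<le> \<bar>\<delta>\<bar> * \<bar>H x - H y\<bar>" by (metis abs_ge_self abs_mult)
  also have "\<dots> \<le> \<bar>\<delta>\<bar> * (K * ?r)" using lip by (simp add: mult_left_mono)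
  finally have "\<mu> * ?r \<le> \<bar>\<delta>\<bar> * K" using \<open>?r > 0\<close> by (simp add: power2_eq_square algebra_simps)
  then have r_bound: "?r \<le> \<bar>\<delta>\<bar> * K / \<mu>" using \<open>\<mu> > 0\<close> by (simp add: field_simps)
  have "K \<ge> 0" using lip[of x y] \<open>?r > 0\<close> by (smt (verit) abs_ge_zero mult_neg_pos)
  have "\<bar>H x - H y\<bar> \<le> K * ?r" by (rule lip)
  also have "\<dots> \<le> K * (\<bar>\<delta>\<bar> * K / \<mu>)" using r_bound \<open>K \<ge> 0\<close> by (rule mult_left_mono)
  also have "\<dots> = K\<^sup>2 / \<mu> * \<bar>\<delta>\<bar>" by (simp add: power2_eq_square)
  finally show ?thesis .
qed

lemma sum_three_blocks:
  fixes h :: "nat \<Rightarrow> 'a::comm_monoid_add"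
  shows "(\<Sum>i=1..n+p+m. h i) = (\<Sum>i=1..n. h i) + (\<Sum>i=1..p. h (n + i)) + (\<Sum>i=1..m. h (n + p + i))"
proof -
  have shift: "(\<Sum>i=k+1..k+l. h i) = (\<Sum>i=1..l. h (k + i))" for k l
    using sum.shift_bounds_cl_nat_ivl[of h 1 k l] by (simp add: add.commute)
  show ?thesis
    using sum.ub_add_nat[of 1 "n + p" h m] sum.ub_add_nat[of 1 n h p] shift[of n p] shift[of "n + p" m]
    by simp
qed

definition constraint_fun ::
  "nat \<Rightarrow> nat \<Rightarrow> (nat \<Rightarrow> real^'t) \<Rightarrow> (nat \<Rightarrow> real^'t) \<Rightarrow> (nat \<Rightarrow> real)
   \<Rightarrow> (nat \<Rightarrow> real^'t \<Rightarrow> real) \<Rightarrow> nat \<Rightarrow> real^'t \<Rightarrow> real" where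
  "constraint_fun n p A Brow b g j x =
     (if j \<le> n then inner (A j) x / real n
      else if j \<le> n + p then inner (Brow (j - n)) x + b (j - n)
      else g (j - n - p) x)"

lemma grad_d_eq_constraint_fun:
  "grad_d n p m A Brow b f g u j = - constraint_fun n p A Brow b g j (xstar n p m A Brow b f g u)"
  by (simp add: grad_d_def constraint_fun_def Let_def)

lemma lagr_eq_sum_constraint_fun:
  "lagr n p m A Brow b f g x u
     = f x + (\<Sum>i=1..n+p+m. u i * constraint_fun n p A Brow b g i x)"
proof -
  let ?C = "\<lambda>i. constraint_fun n p A Brow b g i x"
  have blocks: "(\<Sum>i=1..n. u i * ?C i) = (\<Sum>i=1..n. u i * (inner (A i) x / real n))"
       "(\<Sum>i=1..p. u (n + i) * ?C (n + i)) = (\<Sum>i=1..p. u (n + i) * (inner (Brow i) x + b i))"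
       "(\<Sum>i=1..m. u (n + p + i) * ?C (n + p + i)) = (\<Sum>i=1..m. u (n + p + i) * g i x)"
    by (auto intro!: sum.cong simp: constraint_fun_def)
  show ?thesis
    unfolding lagr_def sum_three_blocks[of "\<lambda>i. u i * ?C i"] blocks by (simp only: add.assoc)
qed

lemma constraint_fun_affine:
  assumes "j \<le> n + p"
  shows "constraint_fun n p A Brow b g j ((1 - t) *\<^sub>R x + t *\<^sub>R y)
           = (1 - t) * constraint_fun n p A Brow b g j x + t * constraint_fun n p A Brow b g j y"
  using assms
  by (simp add: constraint_fun_def inner_add_right add_divide_distrib diff_divide_distrib algebra_simps)

lemma convex_on_constraint_fun_term:
  assumes "w \<in> dual_dom n p m" "i \<le> n + p + m"
    and g_convex: "\<And>i. 1 \<le> i \<Longrightarrow> i \<le> m \<Longrightarrow> convex_on UNIV (g i)"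
  shows "convex_on UNIV (\<lambda>x. w i * constraint_fun n p A Brow b g i x)"
proof (cases "i \<le> n + p")
  case True
  then show ?thesis by (intro convex_on_mult_affine constraint_fun_affine)
next
  case False
  then have "w i \<ge> 0" using assms(1,2) by (auto simp: dual_dom_def)
  moreover have "convex_on UNIV (g (i - n - p))" using False assms(2) by (intro g_convex) auto
  ultimately show ?thesis using False by (simp add: constraint_fun_def convex_on_cmul)
qed

lemma strongly_convex_lagr:
  assumes "strongly_convex \<mu> f" "w \<in> dual_dom n p m"
    and "\<And>i. 1 \<le> i \<Longrightarrow> i \<le> m \<Longrightarrow> convex_on UNIV (g i)"
  shows "strongly_convex \<mu> (\<lambda>x. lagr n p m A Brow b f g x w)"
  unfolding lagr_eq_sum_constraint_fun
  using assms
  by (intro strongly_convex_add_convex_on convex_on_sum_fun convex_on_constraint_fun_term) auto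

lemma xstar_minimizes:
  assumes "strongly_convex \<mu> f" "\<mu> > 0" "w \<in> dual_dom n p m"
    and "\<And>i. 1 \<le> i \<Longrightarrow> i \<le> m \<Longrightarrow> convex_on UNIV (g i)"
  shows "lagr n p m A Brow b f g (xstar n p m A Brow b f g w) w \<le> lagr n p m A Brow b f g y w"
proof -
  have "\<exists>!x. \<forall>y. lagr n p m A Brow b f g x w \<le> lagr n p m A Brow b f g y w"
    using strongly_convex_lagr[OF assms(1,3,4)] assms(2) by (rule strongly_convex_ex1_min)
  from theI'[OF this] show ?thesis unfolding xstar_def by blast
qed

lemma lagr_change_one_coord:
  assumes "1 \<le> j" "j \<le> n + p + m"
    and same: "\<And>i. 1 \<le> i \<Longrightarrow> i \<le> n + p + m \<Longrightarrow> i \<noteq> j \<Longrightarrow> u i = v i"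
  shows "lagr n p m A Brow b f g x u
           = lagr n p m A Brow b f g x v + (u j - v j) * constraint_fun n p A Brow b g j x"
proof -
  let ?I = "{1..n+p+m}" and ?C = "\<lambda>i. constraint_fun n p A Brow b g i x"
  have "(\<Sum>i\<in>?I - {j}. u i * ?C i) = (\<Sum>i\<in>?I - {j}. v i * ?C i)"
    using same by (intro sum.cong) auto
  moreover have "j \<in> ?I" using assms(1,2) by simp
  ultimately show ?thesis
    using sum.remove[of ?I j "\<lambda>i. u i * ?C i"] sum.remove[of ?I j "\<lambda>i. v i * ?C i"]
    by (simp add: lagr_eq_sum_constraint_fun algebra_simps)
qed

lemma constraint_fun_lipschitz:
  assumes "j \<le> n + p + m"
    and g_convex: "\<And>i. 1 \<le> i \<Longrightarrow> i \<le> m \<Longrightarrow> convex_on UNIV (g i)"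
    and g_subgrad: "\<And>i x s. 1 \<le> i \<Longrightarrow> i \<le> m \<Longrightarrow> is_subgradient (g i) x s \<Longrightarrow> norm s \<le> Lg i"
  shows "\<bar>constraint_fun n p A Brow b g j x - constraint_fun n p A Brow b g j y\<bar>
           \<le> (if j \<le> n then norm (A j) / real n
              else if j \<le> n + p then norm (Brow (j - n)) else Lg (j - n - p)) * norm (x - y)"
proof -
  consider (A) "j \<le> n" | (B) "n < j" "j \<le> n + p" | (g) "n + p < j" by linarith
  then show ?thesis
  proof cases
    case A
    have "\<bar>inner (A j) x / real n - inner (A j) y / real n\<bar> = \<bar>inner (A j) (x - y)\<bar> / real n"
      by (simp add: inner_diff_right abs_divide flip: diff_divide_distrib)
    also have "\<dots> \<le> norm (A j) * norm (x - y) / real n"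
      using Cauchy_Schwarz_ineq2 by (rule divide_right_mono) simp
    finally show ?thesis using A by (simp add: constraint_fun_def)
  next
    case B
    have "\<bar>inner (Brow (j - n)) (x - y)\<bar> \<le> norm (Brow (j - n)) * norm (x - y)"
      by (rule Cauchy_Schwarz_ineq2)
    then show ?thesis using B by (simp add: constraint_fun_def inner_diff_right)
  next
    case g
    then have "1 \<le> j - n - p" "j - n - p \<le> m" using assms(1) by auto
    then have "\<bar>g (j - n - p) x - g (j - n - p) y\<bar> \<le> Lg (j - n - p) * norm (x - y)"
      using g_convex g_subgrad by (intro lipschitz_if_bounded_subgradients) auto
    then show ?thesis using g by (simp add: constraint_fun_def)
  qed
qed

lemma abs_le_vnorm:
  assumes "1 \<le> j" "j \<le> N"
  shows "\<bar>w j\<bar> \<le> vnorm N w"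
proof -
  have "(w j)\<^sup>2 \<le> (\<Sum>i=1..N. (w i)\<^sup>2)"
    using assms by (intro member_le_sum) auto
  then show ?thesis unfolding vnorm_def by (metis real_sqrt_abs real_sqrt_le_mono)
qed

theorem lemma1:
  fixes n p m :: nat and \<mu> :: real
    and A Brow :: "nat \<Rightarrow> real^'t" and b :: "nat \<Rightarrow> real"
    and f :: "real^'t \<Rightarrow> real" and g :: "nat \<Rightarrow> real^'t \<Rightarrow> real" and Lg :: "nat \<Rightarrow> real"
    and u v :: "nat \<Rightarrow> real" and j :: nat
  assumes n_pos: "n \<ge> 1"
    and mu_pos: "\<mu> > 0"
    and f_sc: "strongly_convex \<mu> f"
    and g_convex: "\<And>i. 1 \<le> i \<Longrightarrow> i \<le> m \<Longrightarrow> convex_on UNIV (g i)"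
    and g_subgrad: "\<And>i x s. 1 \<le> i \<Longrightarrow> i \<le> m \<Longrightarrow> is_subgradient (g i) x s \<Longrightarrow> norm s \<le> Lg i"
    and u_dom: "u \<in> dual_dom n p m"
    and v_dom: "v \<in> dual_dom n p m"
    and j_range: "1 \<le> j" "j \<le> n + p + m"
    and same: "\<And>i. 1 \<le> i \<Longrightarrow> i \<le> n + p + m \<Longrightarrow> i \<noteq> j \<Longrightarrow> u i = v i"
  shows "\<bar>grad_d n p m A Brow b f g u j - grad_d n p m A Brow b f g v j\<bar>
         \<le> (if j \<le> n then (norm (A j))\<^sup>2 / ((real n)\<^sup>2 * \<mu>)
            else if j \<le> n + p then (norm (Brow (j - n)))\<^sup>2 / \<mu>
            else (Lg (j - n - p))\<^sup>2 / \<mu>) * vnorm (n + p + m) (\<lambda>i. u i - v i)"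
proof -
  let ?L = "lagr n p m A Brow b f g" and ?xs = "xstar n p m A Brow b f g"
    and ?C = "constraint_fun n p A Brow b g j"
  define K where "K = (if j \<le> n then norm (A j) / real n
                       else if j \<le> n + p then norm (Brow (j - n)) else Lg (j - n - p))"
  have coef: "(if j \<le> n then (norm (A j))\<^sup>2 / ((real n)\<^sup>2 * \<mu>)
               else if j \<le> n + p then (norm (Brow (j - n)))\<^sup>2 / \<mu>
               else (Lg (j - n - p))\<^sup>2 / \<mu>) = K\<^sup>2 / \<mu>"
    by (simp add: K_def power_divide)
  have L_u: "(\<lambda>z. ?L z u) = (\<lambda>z. ?L z v + (u j - v j) * ?C z)"
    using j_range same by (intro ext lagr_change_one_coord) auto
  have "\<bar>?C (?xs v) - ?C (?xs u)\<bar> \<le> K\<^sup>2 / \<mu> * \<bar>u j - v j\<bar>"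
  proof (rule strongly_convex_argmin_perturbation[where F = "\<lambda>z. ?L z v" and \<delta> = "u j - v j",
        OF _ _ mu_pos])
    show "strongly_convex \<mu> (\<lambda>z. ?L z v)"
      using f_sc v_dom g_convex by (rule strongly_convex_lagr)
    show "strongly_convex \<mu> (\<lambda>z. ?L z v + (u j - v j) * ?C z)"
      using f_sc u_dom g_convex unfolding L_u[symmetric] by (rule strongly_convex_lagr)
    show "?L (?xs v) v \<le> ?L z v" for z
      using f_sc mu_pos v_dom g_convex by (rule xstar_minimizes)
    have "?L (?xs u) u \<le> ?L z u" for z
      using f_sc mu_pos u_dom g_convex by (rule xstar_minimizes)
    then show "?L (?xs u) v + (u j - v j) * ?C (?xs u) \<le> ?L z v + (u j - v j) * ?C z" for z
      using L_u by metis
    show "\<bar>?C x - ?C y\<bar> \<le> K * norm (x - y)" for x y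
      unfolding K_def using j_range(2) g_convex g_subgrad by (rule constraint_fun_lipschitz)
  qed
  also have "\<dots> \<le> K\<^sup>2 / \<mu> * vnorm (n + p + m) (\<lambda>i. u i - v i)"
    using abs_le_vnorm[OF j_range, of "\<lambda>i. u i - v i"] mu_pos by (intro mult_left_mono) simp_all
  finally show ?thesis
    unfolding grad_d_eq_constraint_fun coef by (simp add: abs_minus_commute)
qed

end
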